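(* Let $k\ge 1$, $d\in\mathbb{N}$ and $\alpha=(\alpha_1,\dots,\alpha_k)\in\mathbb{N}^k$ with $\alpha_1+\dots+\alpha_k=2d$. Then for every finite simple undirected graph, $$w_{\alpha_1}\cdots w_{\alpha_k}\le w_0^{k-1}\,w_{2d}.$$
   Context: $\mathbb{N}$ denotes the nonnegative integers. For $j\in\mathbb{N}$, $w_j$ denotes the total number of walks of length $j$ in the graph (a walk is a sequence of vertices in which consecutive vertices are adjacent; vertices and edges may repeat; the length is the number of edges); in particular $w_0$ is the number of vertices. *)

theory Defs
  imports Main
begin

definition simple_graph :: "'v set \<Rightarrow> ('v \<Rightarrow> 'v \<Rightarrow> bool) \<Rightarrow> bool" where
  "simple_graph V E \<longleftrightarrow> finite V \<and> (\<forall>x y. E x y \<longrightarrow> x \<in> V \<and> y \<in> V)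
     \<and> (\<forall>x y. E x y \<longrightarrow> E y x) \<and> (\<forall>x. \<not> E x x)"

definition walks :: "'v set \<Rightarrow> ('v \<Rightarrow> 'v \<Rightarrow> bool) \<Rightarrow> nat \<Rightarrow> 'v list set" where
  "walks V E j = {p. length p = Suc j \<and> set p \<subseteq> V \<and> (\<forall>i < j. E (p ! i) (p ! Suc i))}"

definition num_walks :: "'v set \<Rightarrow> ('v \<Rightarrow> 'v \<Rightarrow> bool) \<Rightarrow> nat \<Rightarrow> nat" where
  "num_walks V E j = card (walks V E j)"

end

theory Submission
  imports Defs "HOL-Analysis.Convex"
begin

text \<open>Cutting a walk of length \<open>a + b\<close> at its \<open>a\<close>-th vertex \<open>x\<close> gives
  \<open>w (a + b) = (\<Sum>x. F a x * F b x)\<close>, where \<open>F j x\<close> counts the walks of length \<open>j\<close> ending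
  at \<open>x\<close> (by reversal, also those starting at \<open>x\<close>). Cauchy-Schwarz then gives
  \<open>w (a + b)\<^sup>2 \<le> w (2 * a) * w (2 * b)\<close>, so \<open>e i = w (2 * i)\<close> is log-convex and
  \<open>e j ^ d \<le> e 0 ^ (d - j) * e d ^ j\<close>. Writing \<open>a = j + j'\<close> with \<open>j, j' \<le> d\<close> this yields
  \<open>w a ^ (2 * d) \<le> w 0 ^ (2 * d - a) * w (2 * d) ^ a\<close>; multiplying over the entries of
  \<open>\<alpha>\<close> and taking \<open>2 * d\<close>-th roots proves the theorem.\<close>

lemma walks_conv_successively:
  "walks V E j = {p. length p = Suc j \<and> set p \<subseteq> V \<and> successively E p}"
  unfolding walks_def successively_conv_nth by auto

lemma finite_walks: "finite V \<Longrightarrow> finite (walks V E j)"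
  unfolding walks_def by (rule finite_subset[OF _ finite_lists_length_eq]) auto

lemma successively_append_tl:
  assumes "q \<noteq> []" "r \<noteq> []" "hd r = last q"
  shows "successively P (q @ tl r) \<longleftrightarrow> successively P q \<and> successively P r"
  using assms by (cases r) (auto simp: successively_append_iff successively_Cons)

lemma append_tl_in_walks:
  assumes "q \<in> walks V E a" "r \<in> walks V E b" "hd r = last q"
  shows "q @ tl r \<in> walks V E (a + b)"
proof -
  have "q \<noteq> []" "r \<noteq> []" using assms by (auto simp: walks_def)
  then show ?thesis
    using assms successively_append_tl[of q r E] list.set_sel(2)[of r]
    by (auto simp: walks_conv_successively)
qed

lemma take_drop_append_tl:
  assumes "length q = Suc a" "r \<noteq> []" "hd r = last q"
  shows "(q @ tl r) ! a = last q" "take (Suc a) (q @ tl r) = q" "drop a (q @ tl r) = r"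
proof -
  have q: "q = butlast q @ [last q]" "length (butlast q) = a"
    using assms(1) by (auto intro: append_butlast_last_id[symmetric])
  moreover have "q @ tl r = butlast q @ r"
    using assms(2,3) q(1) by (metis append_Cons append_assoc append_Nil list.collapse)
  ultimately show "(q @ tl r) ! a = last q" "take (Suc a) (q @ tl r) = q" "drop a (q @ tl r) = r"
    using assms(2,3) by (simp_all add: nth_append hd_conv_nth take_Suc_conv_app_nth)
qed

lemma last_take_Suc: "a < length p \<Longrightarrow> last (take (Suc a) p) = p ! a"
  by (simp add: take_Suc_conv_app_nth)

lemma take_drop_in_walks:
  assumes "p \<in> walks V E (a + b)"
  shows "take (Suc a) p \<in> walks V E a" "drop a p \<in> walks V E b"
proof -
  have p: "length p = Suc (a + b)" "set p \<subseteq> V" "successively E p"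
    using assms by (simp_all add: walks_conv_successively)
  have "take (Suc a) p \<noteq> []" "drop a p \<noteq> []" "hd (drop a p) = last (take (Suc a) p)"
    using p(1) by (auto simp: hd_drop_conv_nth last_take_Suc)
  moreover have "p = take (Suc a) p @ tl (drop a p)"
    by (metis append_take_drop_id drop_Suc tl_drop)
  ultimately have "successively E (take (Suc a) p)" "successively E (drop a p)"
    using p(3) successively_append_tl by metis+
  then show "take (Suc a) p \<in> walks V E a" "drop a p \<in> walks V E b"
    using p(1,2) set_take_subset[of "Suc a" p] set_drop_subset[of a p]
    by (auto simp: walks_conv_successively)
qed

lemma bij_betw_split_walk:
  "bij_betw (\<lambda>p. (p ! a, take (Suc a) p, drop a p)) (walks V E (a + b))
     (SIGMA x:V. {q \<in> walks V E a. last q = x} \<times> {r \<in> walks V E b. hd r = x})"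
  (is "bij_betw ?split ?W ?S")
proof (rule bij_betw_byWitness[where f' = "\<lambda>(x, q, r). q @ tl r"])
  show "\<forall>p \<in> ?W. (\<lambda>(x, q, r). q @ tl r) (?split p) = p"
    by (metis append_take_drop_id drop_Suc tl_drop case_prod_conv)
  show "\<forall>y \<in> ?S. ?split ((\<lambda>(x, q, r). q @ tl r) y) = y"
  proof
    fix y assume "y \<in> ?S"
    then obtain q r where "y = (last q, q, r)" "q \<in> walks V E a" "r \<in> walks V E b" "hd r = last q"
      by auto
    moreover have "length q = Suc a" "r \<noteq> []"
      using calculation by (auto simp: walks_def)
    ultimately show "?split ((\<lambda>(x, q, r). q @ tl r) y) = y"
      using take_drop_append_tl[of q a r] by simp
  qed
  have "p ! a \<in> V" "last (take (Suc a) p) = p ! a" "hd (drop a p) = p ! a" if "p \<in> ?W" for p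
    using that by (auto simp: walks_def hd_drop_conv_nth last_take_Suc)
  then show "?split ` ?W \<subseteq> ?S"
    using take_drop_in_walks by blast
  show "(\<lambda>(x, q, r). q @ tl r) ` ?S \<subseteq> ?W"
    using append_tl_in_walks by fastforce
qed

lemma rev_in_walks:
  assumes "symp E" "p \<in> walks V E j"
  shows "rev p \<in> walks V E j"
proof -
  have "successively (\<lambda>x y. E y x) p"
    using assms by (auto simp: walks_conv_successively elim: successively_mono dest: sympD)
  then show ?thesis
    using assms(2) by (simp add: walks_conv_successively)
qed

definition num_walks_to :: "'v set \<Rightarrow> ('v \<Rightarrow> 'v \<Rightarrow> bool) \<Rightarrow> nat \<Rightarrow> 'v \<Rightarrow> nat" where
  "num_walks_to V E j x = card {p \<in> walks V E j. last p = x}"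

lemma card_walks_from_eq_num_walks_to:
  assumes "symp E"
  shows "card {p \<in> walks V E j. hd p = x} = num_walks_to V E j x"
proof -
  have "bij_betw rev {p \<in> walks V E j. hd p = x} {p \<in> walks V E j. last p = x}"
    by (rule bij_betw_byWitness[where f' = rev]) (auto simp: hd_rev last_rev rev_in_walks[OF assms])
  then show ?thesis
    unfolding num_walks_to_def by (rule bij_betw_same_card)
qed

lemma num_walks_add:
  assumes "finite V" "symp E"
  shows "num_walks V E (a + b) = (\<Sum>x\<in>V. num_walks_to V E a x * num_walks_to V E b x)"
proof -
  have "num_walks V E (a + b)
      = card (SIGMA x:V. {q \<in> walks V E a. last q = x} \<times> {r \<in> walks V E b. hd r = x})"
    unfolding num_walks_def by (rule bij_betw_same_card[OF bij_betw_split_walk])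
  also have "\<dots> = (\<Sum>x\<in>V. num_walks_to V E a x * card {r \<in> walks V E b. hd r = x})"
    using assms(1) finite_walks[OF assms(1)]
    by (simp add: num_walks_to_def card_cartesian_product)
  finally show ?thesis
    by (simp add: card_walks_from_eq_num_walks_to[OF assms(2)])
qed

lemma num_walks_add_power2_le:
  assumes "finite V" "symp E"
  shows "real (num_walks V E (a + b))^2 \<le> real (num_walks V E (2 * a)) * real (num_walks V E (2 * b))"
  using Cauchy_Schwarz_ineq_sum[of "\<lambda>x. real (num_walks_to V E a x)" "\<lambda>x. real (num_walks_to V E b x)" V]
  by (simp add: num_walks_add[OF assms] mult_2 power2_eq_square)

lemma alternating_walk_in_walks:
  assumes "E x y" "E y x" "x \<in> V" "y \<in> V"
  shows "map (\<lambda>i. if even i then x else y) [0..<Suc m] \<in> walks V E m"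
  using assms by (auto simp: walks_def simp del: upt_Suc)

lemma num_walks_gt_0:
  assumes "simple_graph V E" "E x y"
  shows "num_walks V E m > 0"
proof -
  have "finite V" "E y x" "x \<in> V" "y \<in> V"
    using assms unfolding simple_graph_def by blast+
  then have "walks V E m \<noteq> {}"
    using alternating_walk_in_walks[of E x y V m] assms(2) by blast
  then show ?thesis
    unfolding num_walks_def using finite_walks \<open>finite V\<close> by (simp add: card_gt_0_iff)
qed

lemma prod_lessThan_power_le_prod_atLeastLessThan_power:
  fixes r :: "nat \<Rightarrow> 'a::linordered_semidom"
  assumes "mono r" "\<And>i. 0 \<le> r i" "j \<le> d"
  shows "(\<Prod>i<j. r i) ^ (d - j) \<le> (\<Prod>i=j..<d. r i) ^ j"
proof -
  have "(\<Prod>i<j. r i) ^ (d - j) \<le> (r j ^ j) ^ (d - j)"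
    using assms prod_mono[of "{..<j}" r "\<lambda>_. r j"] by (intro power_mono prod_nonneg) (auto simp: monoD)
  also have "\<dots> = (r j ^ (d - j)) ^ j"
    by (simp add: power_mult[symmetric] mult.commute)
  also have "\<dots> \<le> (\<Prod>i=j..<d. r i) ^ j"
    using assms prod_mono[of "{j..<d}" "\<lambda>_. r j" r] by (intro power_mono) (auto simp: monoD)
  finally show ?thesis .
qed

lemma log_convex_power_le:
  fixes e :: "nat \<Rightarrow> 'a::linordered_field"
  assumes pos: "\<And>i. 0 < e i" and log_convex: "\<And>i. e (Suc i)^2 \<le> e i * e (Suc (Suc i))"
    and "j \<le> d"
  shows "e j ^ d \<le> e 0 ^ (d - j) * e d ^ j"
proof -
  define r where "r i = e (Suc i) / e i" for i
  have "mono r"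
    unfolding mono_iff_le_Suc r_def
    using log_convex pos by (simp add: divide_simps power2_eq_square mult.commute)
  have "e i \<noteq> 0" for i
    using pos[of i] by simp
  then have e_eq: "e n = e 0 * (\<Prod>i<n. r i)" for n
    unfolding r_def using prod_lessThan_telescope[of n e] by simp
  define P Q where "P = (\<Prod>i<j. r i)" and "Q = (\<Prod>i=j..<d. r i)"
  have "0 \<le> r i" for i
    unfolding r_def using pos by (simp add: less_imp_le)
  then have PQ: "P ^ (d - j) \<le> Q ^ j" "0 \<le> P"
    unfolding P_def Q_def using prod_lessThan_power_le_prod_atLeastLessThan_power \<open>mono r\<close> \<open>j \<le> d\<close>
    by (auto intro: prod_nonneg)
  have "e d = e 0 * (P * Q)"
    unfolding e_eq[of d] P_def Q_def using \<open>j \<le> d\<close>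
    by (metis atLeast0LessThan prod.atLeastLessThan_concat zero_le)
  have "e j ^ d = e 0 ^ d * (P ^ (d - j) * P ^ j)"
    unfolding e_eq[of j] P_def[symmetric] using \<open>j \<le> d\<close>
    by (simp add: power_mult_distrib power_add[symmetric])
  also have "\<dots> \<le> e 0 ^ d * (Q ^ j * P ^ j)"
    using PQ pos[of 0] by (intro mult_left_mono mult_right_mono) auto
  also have "\<dots> = e 0 ^ (d - j) * e d ^ j"
    using \<open>e d = e 0 * (P * Q)\<close> \<open>j \<le> d\<close>
    by (simp add: power_mult_distrib power_add[symmetric] ac_simps)
  finally show ?thesis .
qed

lemma num_walks_power_le:
  assumes G: "simple_graph V E" and "a \<le> 2 * d"
  shows "num_walks V E a ^ (2 * d) \<le> num_walks V E 0 ^ (2 * d - a) * num_walks V E (2 * d) ^ a"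
proof -
  have "finite V" "symp E"
    using G unfolding simple_graph_def by (auto intro: sympI)
  consider "a = 0" | "0 < a" "\<nexists>x y. E x y" | x y where "E x y"
    by blast
  then show ?thesis
  proof cases
    case 2
    then have "walks V E a = {}"
      unfolding walks_def by auto
    then show ?thesis
      using \<open>0 < a\<close> \<open>a \<le> 2 * d\<close> by (simp add: num_walks_def power_0_left)
  next
    case (3 x y)
    define e where "e i = real (num_walks V E (2 * i))" for i
    have "0 < e i" for i
      unfolding e_def using num_walks_gt_0[OF G \<open>E x y\<close>] by simp
    moreover have "e (Suc i)^2 \<le> e i * e (Suc (Suc i))" for i
      unfolding e_def using num_walks_add_power2_le[OF \<open>finite V\<close> \<open>symp E\<close>, of i "Suc (Suc i)"]
      by (simp add: mult_2)
    ultimately have log_convex: "e j ^ d \<le> e 0 ^ (d - j) * e d ^ j" if "j \<le> d" for j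
      using log_convex_power_le that by blast
    define j j' where "j = a div 2" and "j' = a - a div 2"
    have "j \<le> d" "j' \<le> d" and exps: "j + j' = a" "(d - j) + (d - j') = 2 * d - a"
      unfolding j_def j'_def using \<open>a \<le> 2 * d\<close> by auto
    have "real (num_walks V E a) ^ (2 * d) = (real (num_walks V E (j + j'))^2) ^ d"
      using exps by (simp add: power_mult)
    also have "\<dots> \<le> (e j * e j') ^ d"
      unfolding e_def using num_walks_add_power2_le[OF \<open>finite V\<close> \<open>symp E\<close>]
      by (intro power_mono) auto
    also have "\<dots> = e j ^ d * e j' ^ d"
      by (simp add: power_mult_distrib)
    also have "\<dots> \<le> (e 0 ^ (d - j) * e d ^ j) * (e 0 ^ (d - j') * e d ^ j')"
      using log_convex \<open>j \<le> d\<close> \<open>j' \<le> d\<close> \<open>\<And>i. 0 < e i\<close>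
      by (intro mult_mono) (auto intro: less_imp_le)
    also have "\<dots> = e 0 ^ ((d - j) + (d - j')) * e d ^ (j + j')"
      by (simp add: power_add ac_simps)
    also have "\<dots> = e 0 ^ (2 * d - a) * e d ^ a"
      unfolding exps ..
    finally show ?thesis
      unfolding e_def by (simp flip: of_nat_power of_nat_mult)
  qed simp
qed

lemma prod_list_power_le:
  fixes f :: "nat \<Rightarrow> nat"
  assumes "\<And>a. a \<in> set \<alpha> \<Longrightarrow> f a ^ m \<le> n ^ (m - a) * c ^ a"
  shows "(\<Prod>a\<leftarrow>\<alpha>. f a) ^ m \<le> n ^ (\<Sum>a\<leftarrow>\<alpha>. m - a) * c ^ sum_list \<alpha>"
  using assms
proof (induction \<alpha>)
  case (Cons a \<alpha>)
  have "(\<Prod>b\<leftarrow>a # \<alpha>. f b) ^ m = f a ^ m * (\<Prod>b\<leftarrow>\<alpha>. f b) ^ m"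
    by (simp add: power_mult_distrib)
  also have "\<dots> \<le> (n ^ (m - a) * c ^ a) * (n ^ (\<Sum>b\<leftarrow>\<alpha>. m - b) * c ^ sum_list \<alpha>)"
    using Cons by (intro mult_mono) auto
  finally show ?case
    by (simp add: power_add ac_simps)
qed simp

lemma sum_list_diff_eq: "(\<Sum>a\<leftarrow>\<alpha>. sum_list \<alpha> - a) = (length \<alpha> - 1) * sum_list \<alpha>"
proof -
  have "(\<Sum>a\<leftarrow>\<alpha>. sum_list \<alpha> - a) + sum_list \<alpha> = length \<alpha> * sum_list \<alpha>"
    using sum_list_addf[of "\<lambda>a. sum_list \<alpha> - a" id \<alpha>] sum_list_triv[of "sum_list \<alpha>" \<alpha>]
      member_le_sum_list[of _ \<alpha>]
    by (simp add: map_idI cong: map_cong)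
  moreover have "(length \<alpha> - 1) * sum_list \<alpha> = length \<alpha> * sum_list \<alpha> - sum_list \<alpha>"
    by (simp add: diff_mult_distrib)
  ultimately show ?thesis
    by linarith
qed

theorem theorem1:
  fixes V :: "'v set" and E :: "'v \<Rightarrow> 'v \<Rightarrow> bool"
    and \<alpha> :: "nat list" and d :: nat
  assumes "simple_graph V E"
    and "length \<alpha> \<ge> 1"
    and "sum_list \<alpha> = 2 * d"
  shows "(\<Prod>a\<leftarrow>\<alpha>. num_walks V E a)
           \<le> num_walks V E 0 ^ (length \<alpha> - 1) * num_walks V E (2 * d)"
proof (cases "d = 0")
  case True
  then have "\<alpha> = replicate (length \<alpha>) 0"
    using assms(3) by (simp add: replicate_length_same)
  then have "(\<Prod>a\<leftarrow>\<alpha>. num_walks V E a) = num_walks V E 0 ^ length \<alpha>"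
    by (metis map_replicate prod_list_replicate)
  then show ?thesis
    using True assms(2) by (cases "length \<alpha>") simp_all
next
  case False
  have "a \<le> 2 * d" if "a \<in> set \<alpha>" for a
    using that assms(3) member_le_sum_list[of a \<alpha>] by simp
  then have "(\<Prod>a\<leftarrow>\<alpha>. num_walks V E a) ^ (2 * d)
      \<le> num_walks V E 0 ^ (\<Sum>a\<leftarrow>\<alpha>. 2 * d - a) * num_walks V E (2 * d) ^ sum_list \<alpha>"
    using num_walks_power_le[OF assms(1)] by (intro prod_list_power_le) blast
  also have "\<dots> = (num_walks V E 0 ^ (length \<alpha> - 1) * num_walks V E (2 * d)) ^ (2 * d)"
    using sum_list_diff_eq[of \<alpha>] unfolding assms(3)
    by (simp add: power_mult power_mult_distrib mult.commute)
  finally show ?thesis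
    using False by simp
qed

end
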